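(* Let $G$ be a group, $\mathcal F\subset\mathcal P_G$ a left-invariant lower family, $A\subset G$, and $\alpha$ an ordinal. Then $A\in\tau^\alpha(\mathcal F)$ if and only if the $\tau$-tree $T_A$ is well-founded and $\mathrm{rank}(T_A)\le\alpha$ when $\alpha<\omega$, respectively $\mathrm{rank}(T_A)\le\alpha+1$ when $\alpha\ge\omega$.
   Context: $e$ is the neutral element of $G$, $G_\circ=G\setminus\{e\}$. $G_\circ^{<\omega}=\bigcup_{n\in\omega}G_\circ^n$ is the tree of finite sequences, ordered by $s\le t$ iff $s$ is an initial segment of $t$; for $s\in G_\circ^{<\omega}$ and $x\in G_\circ$, $s\hat{\ }x$ is the sequence $s$ extended by $x$. For $A\subset G$ define $A_\emptyset=A$ and $A_{s\hat{\ }x}=A_s\cap xA_s$; thus $A_{(g_0,\dots,g_n)}=\bigcap_{k_0,\dots,k_n\in\{0,1\}}g_n^{k_n}\cdots g_0^{k_0}A$. The $\tau$-tree of $A$ is $T_A=\{s\in G_\circ^{<\omega}: A_s\notin\mathcal F\}$ (a lower subtree). A poset $X$ is well-founded if every nonempty subset has a maximal element; then $\mathrm{rank}_X(x)=\sup\{\mathrm{rank}_X(y)+1: y>x\}$ ($\sup\emptyset=0$), and $\mathrm{rank}(X)=\sup\{\mathrm{rank}_X(x)+1:x\in X\}$ for $X\neq\emptyset$, $\mathrm{rank}(\emptyset)=0$. For a left-invariant lower $\mathcal F$ ($xF\in\mathcal F$ for $F\in\mathcal F$, $x\in G$; closed under subsets): $\tau(\mathcal F)=\{A: xA\cap yA\in\mathcal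 F$ for all distinct $x,y\in G\}$, $\tau^0(\mathcal F)=\mathcal F$, $\tau^{<\alpha}(\mathcal F)=\bigcup_{\beta<\alpha}\tau^\beta(\mathcal F)$, $\tau^\alpha(\mathcal F)=\tau(\tau^{<\alpha}(\mathcal F))$ for $\alpha>0$. *)

theory Defs
  imports "HOL-Algebra.Coset" "HOL-Library.Sublist"
begin

definition left_inv_lower :: "('g, 'b) monoid_scheme \<Rightarrow> 'g set set \<Rightarrow> bool" where
  "left_inv_lower G \<F> \<longleftrightarrow>
     \<F> \<subseteq> Pow (carrier G)
   \<and> (\<forall>X\<in>\<F>. \<forall>x\<in>carrier G. x <#\<^bsub>G\<^esub> X \<in> \<F>)
   \<and> (\<forall>X\<in>\<F>. \<forall>Y. Y \<subseteq> X \<longrightarrow> Y \<in> \<F>)"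

definition tau :: "('g, 'b) monoid_scheme \<Rightarrow> 'g set set \<Rightarrow> 'g set set" where
  "tau G \<F> = {A. A \<subseteq> carrier G \<and>
     (\<forall>x\<in>carrier G. \<forall>y\<in>carrier G. x \<noteq> y \<longrightarrow> (x <#\<^bsub>G\<^esub> A) \<inter> (y <#\<^bsub>G\<^esub> A) \<in> \<F>)}"

text \<open>Transfinite iterates: ordinals are represented by elements of an arbitrary
  well-ordered type; tau^0 = F, tau^alpha = tau(union of tau^beta, beta < alpha).\<close>
definition tau_iter :: "('g, 'b) monoid_scheme \<Rightarrow> 'g set set \<Rightarrow> 'o::wellorder \<Rightarrow> 'g set set" where
  "tau_iter G \<F> = wfrec {(b, a). b < a}
     (\<lambda>rec a. if (\<forall>b. \<not> b < a) then \<F> else tau G (\<Union>b\<in>{b. b < a}. rec b))"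

definition shift_set :: "('g, 'b) monoid_scheme \<Rightarrow> 'g set \<Rightarrow> 'g list \<Rightarrow> 'g set" where
  "shift_set G A s = fold (\<lambda>x B. B \<inter> (x <#\<^bsub>G\<^esub> B)) s A"

definition tau_tree :: "('g, 'b) monoid_scheme \<Rightarrow> 'g set set \<Rightarrow> 'g set \<Rightarrow> 'g list set" where
  "tau_tree G \<F> A = {s. set s \<subseteq> carrier G - {\<one>\<^bsub>G\<^esub>} \<and> shift_set G A s \<notin> \<F>}"

definition wf_poset :: "'a list set \<Rightarrow> bool" where
  "wf_poset T \<longleftrightarrow> (\<forall>S\<subseteq>T. S \<noteq> {} \<longrightarrow> (\<exists>m\<in>S. \<forall>t\<in>S. \<not> strict_prefix m t))"

text \<open>r is the rank function of T with values in the well-order 'o: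
  r s = sup { r t + 1 : t > s } (the least gamma with r t < gamma for all t > s).\<close>
definition is_rank_fn :: "'a list set \<Rightarrow> ('a list \<Rightarrow> 'o::wellorder) \<Rightarrow> bool" where
  "is_rank_fn T r \<longleftrightarrow> (\<forall>s\<in>T.
      (\<forall>t\<in>T. strict_prefix s t \<longrightarrow> r t < r s)
    \<and> (\<forall>\<gamma>. (\<forall>t\<in>T. strict_prefix s t \<longrightarrow> r t < \<gamma>) \<longrightarrow> r s \<le> \<gamma>))"

text \<open>rank(T) \<le> alpha, i.e. sup {rank(s)+1 : s in T} \<le> alpha, i.e. all node ranks < alpha.\<close>
definition tree_rank_le :: "'a list set \<Rightarrow> 'o::wellorder \<Rightarrow> bool" where
  "tree_rank_le T \<alpha> \<longleftrightarrow> (\<exists>r::'a list \<Rightarrow> 'o. is_rank_fn T r \<and> (\<forall>s\<in>T. r s < \<alpha>))"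

text \<open>rank(T) \<le> alpha + 1, i.e. all node ranks \<le> alpha.\<close>
definition tree_rank_le_succ :: "'a list set \<Rightarrow> 'o::wellorder \<Rightarrow> bool" where
  "tree_rank_le_succ T \<alpha> \<longleftrightarrow> (\<exists>r::'a list \<Rightarrow> 'o. is_rank_fn T r \<and> (\<forall>s\<in>T. r s \<le> \<alpha>))"

text \<open>alpha < omega iff alpha is a finite ordinal.\<close>
definition finite_ord :: "'o::wellorder \<Rightarrow> bool" where
  "finite_ord \<alpha> \<longleftrightarrow> finite {..<\<alpha>}"

end

theory Submission
  imports Defs
begin

(* A node of the tau-tree T_A may carry rank gamma in a tree of rank at most alpha
   (resp. alpha+1 for infinite alpha) iff gamma < alpha (resp. gamma \<le> alpha); we call such
   gamma admissible for alpha.  Instead of working with the rank function directly we work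
   with strictly decreasing labellings of the tree by admissible ordinals: such a labelling
   exists iff the tree is well-founded with the required rank bound, because the pointwise
   least admissible decreasing labelling is exactly the rank function.

   Admissible labellings behave well under the two tree operations that mirror tau: a tree
   has an admissible labelling for alpha iff every branch below a child z of the root has one
   for some beta < alpha.  On the group side, A \<in> tau(H) iff A \<inter> zA \<in> H for every z \<noteq> e, and
   the tau-tree of A \<inter> zA is the branch of T_A below z.  Transfinite induction on alpha then
   proves  A \<in> tau^alpha(F)  iff  T_A has an admissible labelling for alpha,  and the theorem
   follows by combining this with the rank characterisation of admissible labellings. *)


subsection \<open>Admissible ranks\<close>

text \<open>An ordinal \<open>\<gamma>\<close> is admissible as a node rank for the bound \<open>\<alpha>\<close>: rank(T) \<le> \<alpha> for finite
  \<open>\<alpha>\<close>, and rank(T) \<le> \<alpha>+1 for infinite \<open>\<alpha>\<close>, mean that all node ranks are admissible.\<close>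
definition admissible :: "'o::wellorder \<Rightarrow> 'o \<Rightarrow> bool" where
  "admissible \<alpha> \<gamma> \<longleftrightarrow> (if finite_ord \<alpha> then \<gamma> < \<alpha> else \<gamma> \<le> \<alpha>)"

lemma finite_ord_mono: "finite_ord (\<alpha>::'o::wellorder) \<Longrightarrow> \<beta> \<le> \<alpha> \<Longrightarrow> finite_ord \<beta>"
  unfolding finite_ord_def by (rule finite_subset[of _ "{..<\<alpha>}"]) auto

lemma admissible_le: "admissible \<beta> \<gamma> \<Longrightarrow> \<gamma> \<le> (\<beta>::'o::wellorder)"
  unfolding admissible_def by (auto split: if_splits)

lemma admissible_downward: "admissible \<alpha> \<delta> \<Longrightarrow> \<gamma> \<le> \<delta> \<Longrightarrow> admissible (\<alpha>::'o::wellorder) \<gamma>"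
  unfolding admissible_def by (auto split: if_splits)

lemma wellorder_successor:
  fixes m :: "'o::wellorder"
  assumes "m < \<delta>"
  obtains s where "m < s" "s \<le> \<delta>" "{..<s} = insert m {..<m}"
proof
  define s where "s = (LEAST x. m < x)"
  show ms: "m < s" unfolding s_def by (rule LeastI[of _ \<delta>]) (rule assms)
  show "s \<le> \<delta>" unfolding s_def by (rule Least_le) (rule assms)
  have "\<not> m < x" if "x < s" for x
    using that not_less_Least[of x "\<lambda>x. m < x"] by (simp add: s_def)
  then show "{..<s} = insert m {..<m}" using ms by force
qed

text \<open>A rank strictly below an admissible one for \<open>\<alpha>\<close> is admissible for some \<open>\<beta> < \<alpha>\<close>
  (for finite ranks take \<open>\<beta>\<close> the successor of the rank, for infinite ones the rank itself).\<close>
lemma admissible_below: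
  fixes m :: "'o::wellorder"
  assumes m: "m < \<delta>" and \<delta>: "admissible \<alpha> \<delta>"
  shows "\<exists>\<beta><\<alpha>. admissible \<beta> m"
proof (cases "finite_ord m")
  case False
  then have "admissible m m" by (simp add: admissible_def)
  moreover have "m < \<alpha>" using m admissible_le[OF \<delta>] by simp
  ultimately show ?thesis by blast
next
  case True
  obtain s where ms: "m < s" and sd: "s \<le> \<delta>" and s: "{..<s} = insert m {..<m}"
    using wellorder_successor[OF m] .
  have fs: "finite_ord s" using True unfolding finite_ord_def s by simp
  have "s < \<alpha>"
  proof (cases "finite_ord \<alpha>")
    case True then show ?thesis using \<delta> sd by (simp add: admissible_def)
  next
    case False
    then have "s \<noteq> \<alpha>" using fs by auto
    then show ?thesis using \<delta> sd False by (simp add: admissible_def)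
  qed
  moreover have "admissible s m" using fs ms by (simp add: admissible_def)
  ultimately show ?thesis by blast
qed

text \<open>Conversely, all ranks admissible for some \<open>\<beta> < \<alpha>\<close> lie strictly below a single rank
  admissible for \<open>\<alpha>\<close>; this is the label given to the root when branches are glued.\<close>
lemma admissible_above:
  fixes \<alpha> :: "'o::wellorder"
  assumes "\<exists>b. b < \<alpha>"
  shows "\<exists>\<delta>. admissible \<alpha> \<delta> \<and> (\<forall>\<beta><\<alpha>. \<forall>\<gamma>. admissible \<beta> \<gamma> \<longrightarrow> \<gamma> < \<delta>)"
proof (cases "finite_ord \<alpha>")
  case True
  define \<delta> where "\<delta> = Max {..<\<alpha>}"
  have fin: "finite {..<\<alpha>}" using True by (simp add: finite_ord_def)
  have "\<delta> \<in> {..<\<alpha>}" unfolding \<delta>_def using fin assms by (intro Max_in) auto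
  then have "admissible \<alpha> \<delta>" using True by (simp add: admissible_def)
  moreover have "\<gamma> < \<delta>" if b: "\<beta> < \<alpha>" and g: "admissible \<beta> \<gamma>" for \<beta> \<gamma>
  proof -
    have "\<gamma> < \<beta>" using g finite_ord_mono[OF True less_imp_le[OF b]] by (simp add: admissible_def)
    also have "\<beta> \<le> \<delta>" unfolding \<delta>_def using fin b by simp
    finally show ?thesis .
  qed
  ultimately show ?thesis by blast
next
  case False
  then have "admissible \<alpha> \<alpha>" by (simp add: admissible_def)
  moreover have "\<forall>\<beta><\<alpha>. \<forall>\<gamma>. admissible \<beta> \<gamma> \<longrightarrow> \<gamma> < \<alpha>"
    using admissible_le by (metis le_less_trans)
  ultimately show ?thesis by blast
qed


subsection \<open>Admissible labellings of trees\<close>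

definition decreasing :: "'a list set \<Rightarrow> ('a list \<Rightarrow> 'o::wellorder) \<Rightarrow> bool" where
  "decreasing T d \<longleftrightarrow> (\<forall>s\<in>T. \<forall>t\<in>T. strict_prefix s t \<longrightarrow> d t < d s)"

definition admissible_labelling :: "'a list set \<Rightarrow> 'o::wellorder \<Rightarrow> ('a list \<Rightarrow> 'o) \<Rightarrow> bool" where
  "admissible_labelling T \<alpha> d \<longleftrightarrow> decreasing T d \<and> (\<forall>s\<in>T. admissible \<alpha> (d s))"

definition labellable :: "'a list set \<Rightarrow> 'o::wellorder \<Rightarrow> bool" where
  "labellable T \<alpha> \<longleftrightarrow> (\<exists>d. admissible_labelling T \<alpha> d)"

text \<open>A decreasing ordinal labelling witnesses well-foundedness: a node of least label in a
  nonempty subset is maximal there.\<close>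
lemma decreasing_wf_poset:
  fixes d :: "'a list \<Rightarrow> 'o::wellorder"
  assumes dec: "decreasing T d"
  shows "wf_poset T"
  unfolding wf_poset_def
proof (intro allI impI)
  fix S assume S: "S \<subseteq> T" "S \<noteq> {}"
  have "(LEAST \<gamma>. \<gamma> \<in> d ` S) \<in> d ` S" using S(2) by (auto intro: LeastI)
  then obtain m where least_eq: "(LEAST \<gamma>. \<gamma> \<in> d ` S) = d m" and m: "m \<in> S" by (rule imageE)
  have least: "d m \<le> d t" if "t \<in> S" for t
    unfolding least_eq[symmetric] by (rule Least_le) (use that in blast)
  have "\<not> strict_prefix m t" if "t \<in> S" for t
    using dec S(1) m that least[OF that] unfolding decreasing_def by force
  with m show "\<exists>m\<in>S. \<forall>t\<in>S. \<not> strict_prefix m t" by blast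
qed

definition least_label :: "'a list set \<Rightarrow> 'o::wellorder \<Rightarrow> 'a list \<Rightarrow> 'o" where
  "least_label T \<alpha> s = (LEAST \<gamma>. \<exists>d. admissible_labelling T \<alpha> d \<and> d s = \<gamma>)"

context
  fixes T :: "'a list set" and \<alpha> :: "'o::wellorder"
  assumes lab: "labellable T \<alpha>"
begin

lemma least_label_attained: "\<exists>d. admissible_labelling T \<alpha> d \<and> d s = least_label T \<alpha> s"
proof -
  have "\<exists>\<gamma> d. admissible_labelling T \<alpha> d \<and> d s = \<gamma>" using lab unfolding labellable_def by blast
  from LeastI_ex[OF this] show ?thesis unfolding least_label_def by blast
qed

lemma least_label_le: "admissible_labelling T \<alpha> d \<Longrightarrow> least_label T \<alpha> s \<le> d s"
  unfolding least_label_def by (rule Least_le) blast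

lemma least_label_decreasing: "decreasing T (least_label T \<alpha>)"
  unfolding decreasing_def
proof (intro ballI impI)
  fix s t assume st: "s \<in> T" "t \<in> T" "strict_prefix s t"
  obtain d where d: "admissible_labelling T \<alpha> d" "d s = least_label T \<alpha> s"
    using least_label_attained by blast
  have "least_label T \<alpha> t \<le> d t" using least_label_le[OF d(1)] .
  also have "d t < d s" using d(1) st unfolding admissible_labelling_def decreasing_def by blast
  finally show "least_label T \<alpha> t < least_label T \<alpha> s" using d(2) by simp
qed

lemma least_label_admissible: "s \<in> T \<Longrightarrow> admissible \<alpha> (least_label T \<alpha> s)"
  using least_label_attained[of s] unfolding admissible_labelling_def by metis

text \<open>Minimality: the least label of \<open>s\<close> is the supremum of the successors of the labels
  above \<open>s\<close>; otherwise lowering the label of \<open>s\<close> alone gives a smaller admissible labelling.\<close>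
lemma least_label_is_rank_fn: "is_rank_fn T (least_label T \<alpha>)"
  unfolding is_rank_fn_def
proof (intro ballI conjI allI impI)
  let ?r = "least_label T \<alpha>"
  fix s t assume "s \<in> T" "t \<in> T" "strict_prefix s t"
  then show "?r t < ?r s" using least_label_decreasing unfolding decreasing_def by blast
next
  let ?r = "least_label T \<alpha>"
  fix s \<gamma> assume s: "s \<in> T" and above: "\<forall>t\<in>T. strict_prefix s t \<longrightarrow> ?r t < \<gamma>"
  show "?r s \<le> \<gamma>"
  proof (rule ccontr)
    assume "\<not> ?r s \<le> \<gamma>"
    then have lt: "\<gamma> < ?r s" by simp
    define d where "d = ?r(s := \<gamma>)"
    have "decreasing T d" unfolding decreasing_def
    proof (intro ballI impI)
      fix u v assume uv: "u \<in> T" "v \<in> T" "strict_prefix u v"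
      then have "?r v < ?r u" using least_label_decreasing unfolding decreasing_def by blast
      then show "d v < d u" using uv above lt by (auto simp: d_def)
    qed
    moreover have "\<forall>u\<in>T. admissible \<alpha> (d u)"
      using least_label_admissible admissible_downward[OF least_label_admissible[OF s]] lt
      by (simp add: d_def)
    ultimately have "?r s \<le> d s" by (intro least_label_le) (simp add: admissible_labelling_def)
    then show False using lt by (simp add: d_def)
  qed
qed

end

lemma rank_bound_iff_labellable:
  fixes T :: "'a list set" and \<alpha> :: "'o::wellorder"
  shows "(wf_poset T \<and> (if finite_ord \<alpha> then tree_rank_le T \<alpha> else tree_rank_le_succ T \<alpha>))
          \<longleftrightarrow> labellable T \<alpha>"
proof
  assume "wf_poset T \<and> (if finite_ord \<alpha> then tree_rank_le T \<alpha> else tree_rank_le_succ T \<alpha>)"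
  then obtain r :: "'a list \<Rightarrow> 'o" where r: "is_rank_fn T r" "\<forall>s\<in>T. admissible \<alpha> (r s)"
    by (cases "finite_ord \<alpha>") (auto simp: tree_rank_le_def tree_rank_le_succ_def admissible_def)
  have "decreasing T r" using r(1) unfolding is_rank_fn_def decreasing_def by blast
  with r(2) show "labellable T \<alpha>" unfolding labellable_def admissible_labelling_def by blast
next
  assume lab: "labellable T \<alpha>"
  then have "wf_poset T"
    unfolding labellable_def admissible_labelling_def using decreasing_wf_poset by blast
  with least_label_is_rank_fn[OF lab] least_label_admissible[OF lab] show
    "wf_poset T \<and> (if finite_ord \<alpha> then tree_rank_le T \<alpha> else tree_rank_le_succ T \<alpha>)"
    by (auto simp: tree_rank_le_def tree_rank_le_succ_def admissible_def)
qed

definition prefix_closed :: "'a list set \<Rightarrow> bool" where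
  "prefix_closed T \<longleftrightarrow> (\<forall>t\<in>T. \<forall>s. prefix s t \<longrightarrow> s \<in> T)"

definition branch :: "'a list set \<Rightarrow> 'a \<Rightarrow> 'a list set" where
  "branch T z = {s. z # s \<in> T}"

lemma labellable_bottom:
  assumes "\<forall>b. \<not> b < (\<alpha>::'o::wellorder)"
  shows "labellable T \<alpha> \<longleftrightarrow> T = {}"
proof -
  have "{..<\<alpha>} = {}" using assms by auto
  then have "finite_ord \<alpha>" by (simp add: finite_ord_def)
  then have "\<not> admissible \<alpha> \<gamma>" for \<gamma> using assms by (simp add: admissible_def)
  then show ?thesis unfolding labellable_def admissible_labelling_def decreasing_def by auto
qed

lemma labellable_glue:
  fixes T :: "'a list set" and \<alpha> :: "'o::wellorder"
  assumes children: "\<And>z s. z # s \<in> T \<Longrightarrow> z \<in> C"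
    and pos: "\<exists>b. b < \<alpha>"
    and branches: "\<forall>z\<in>C. \<exists>\<beta><\<alpha>. labellable (branch T z) \<beta>"
  shows "labellable T \<alpha>"
proof -
  obtain B D where BD: "\<And>z. z \<in> C \<Longrightarrow> B z < \<alpha> \<and> decreasing (branch T z) (D z :: 'a list \<Rightarrow> 'o)
       \<and> (\<forall>s\<in>branch T z. admissible (B z) (D z s))"
    using branches unfolding labellable_def admissible_labelling_def by metis
  obtain \<delta> where \<delta>: "admissible \<alpha> \<delta>" "\<And>\<beta> \<gamma>. \<beta> < \<alpha> \<Longrightarrow> admissible \<beta> \<gamma> \<Longrightarrow> \<gamma> < \<delta>"
    using admissible_above[OF pos] by blast
  define d where "d s = (case s of [] \<Rightarrow> \<delta> | z # s' \<Rightarrow> D z s')" for s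
  have below_root: "d (z # s) < \<delta>" if zs: "z # s \<in> T" for z s
  proof -
    have "B z < \<alpha>" "admissible (B z) (D z s)"
      using BD[OF children[OF zs]] zs by (auto simp: branch_def)
    then show ?thesis using \<delta>(2) by (simp add: d_def)
  qed
  have "d t < d s" if st: "s \<in> T" "t \<in> T" "strict_prefix s t" for s t
  proof (cases s)
    case Nil
    then obtain z t' where "t = z # t'" using st(3) by (cases t) auto
    then show ?thesis using below_root st(2) Nil by (simp add: d_def)
  next
    case (Cons z s')
    then obtain t' where t: "t = z # t'" "strict_prefix s' t'" using st(3)
      by (cases t) auto
    then show ?thesis
      using BD[OF children[OF st(1)[unfolded Cons]]] st Cons
      unfolding decreasing_def branch_def by (simp add: d_def)
  qed
  moreover have "admissible \<alpha> (d s)" if "s \<in> T" for s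
  proof (cases s)
    case Nil then show ?thesis using \<delta>(1) by (simp add: d_def)
  next
    case Cons then show ?thesis using that below_root admissible_downward[OF \<delta>(1)] less_imp_le by blast
  qed
  ultimately show ?thesis unfolding labellable_def admissible_labelling_def decreasing_def by blast
qed

text \<open>Restriction: in a labellable prefix-closed tree every branch is labellable below \<open>\<alpha>\<close>,
  with the bound \<open>\<beta>\<close> obtained from the label of the child by \<open>admissible_below\<close>.\<close>
lemma labellable_branch:
  fixes T :: "'a list set" and \<alpha> :: "'o::wellorder"
  assumes closed: "prefix_closed T"
    and pos: "\<exists>b. b < \<alpha>"
    and lab: "labellable T \<alpha>"
  shows "\<exists>\<beta><\<alpha>. labellable (branch T z) \<beta>"
proof (cases "branch T z = {}")
  case True
  then show ?thesis using pos unfolding labellable_def admissible_labelling_def decreasing_def by auto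
next
  case False
  obtain d :: "'a list \<Rightarrow> 'o" where d: "decreasing T d" "\<forall>s\<in>T. admissible \<alpha> (d s)"
    using lab unfolding labellable_def admissible_labelling_def by blast
  from False obtain s0 where "z # s0 \<in> T" by (auto simp: branch_def)
  then have zT: "[z] \<in> T" and rootT: "[] \<in> T" using closed unfolding prefix_closed_def by auto
  have "d [z] < d []" using d(1) zT rootT unfolding decreasing_def by simp
  then obtain \<beta> where \<beta>: "\<beta> < \<alpha>" "admissible \<beta> (d [z])"
    using admissible_below d(2) rootT by blast
  have "d (z # s) \<le> d [z]" if "z # s \<in> T" for s
    using d(1) zT that unfolding decreasing_def by (cases s) (auto intro: less_imp_le)
  then have "\<forall>s\<in>branch T z. admissible \<beta> (d (z # s))"
    using admissible_downward[OF \<beta>(2)] by (auto simp: branch_def)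
  moreover have "decreasing (branch T z) (\<lambda>s. d (z # s))"
    using d(1) unfolding decreasing_def branch_def by simp
  ultimately show ?thesis using \<beta>(1) unfolding labellable_def admissible_labelling_def by blast
qed

text \<open>The recursive description of labellability that mirrors the definition of \<open>\<tau>\<^sup>\<alpha>\<close>.\<close>
lemma labellable_iff_branches:
  fixes T :: "'a list set" and \<alpha> :: "'o::wellorder"
  assumes "prefix_closed T" and "\<And>z s. z # s \<in> T \<Longrightarrow> z \<in> C" and "\<exists>b. b < \<alpha>"
  shows "labellable T \<alpha> \<longleftrightarrow> (\<forall>z\<in>C. \<exists>\<beta><\<alpha>. labellable (branch T z) \<beta>)"
  using labellable_glue[of T C \<alpha>] labellable_branch[of T \<alpha>] assms by blast


lemma left_inv_lower_subset: "left_inv_lower G F \<Longrightarrow> X \<in> F \<Longrightarrow> Y \<subseteq> X \<Longrightarrow> Y \<in> F"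
  unfolding left_inv_lower_def by blast

lemma left_inv_lower_translate:
  "left_inv_lower G F \<Longrightarrow> X \<in> F \<Longrightarrow> x \<in> carrier G \<Longrightarrow> x <#\<^bsub>G\<^esub> X \<in> F"
  unfolding left_inv_lower_def by blast

lemma left_inv_lower_UN:
  "(\<And>i. i \<in> I \<Longrightarrow> left_inv_lower G (H i)) \<Longrightarrow> left_inv_lower G (\<Union>i\<in>I. H i)"
  unfolding left_inv_lower_def by blast


subsection \<open>The sets \<open>A\<^sub>s\<close> and the \<open>\<tau>\<close>-tree\<close>

lemma shift_set_Cons: "shift_set G A (z # s) = shift_set G (A \<inter> (z <#\<^bsub>G\<^esub> A)) s"
  by (simp add: shift_set_def)

lemma shift_set_append: "shift_set G A (s @ u) = shift_set G (shift_set G A s) u"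
  by (simp add: shift_set_def)

lemma shift_set_subset: "shift_set G A s \<subseteq> A"
proof (induction s arbitrary: A)
  case (Cons z s)
  show ?case using Cons.IH[of "A \<inter> (z <#\<^bsub>G\<^esub> A)"] by (simp add: shift_set_Cons)
qed (simp add: shift_set_def)

text \<open>Since \<open>A\<^sub>s\<close> shrinks along extensions and \<open>\<F>\<close> is lower, the \<open>\<tau>\<close>-tree is prefix closed.\<close>
lemma tau_tree_prefix_closed:
  assumes F: "left_inv_lower G F"
  shows "prefix_closed (tau_tree G F A)"
  unfolding prefix_closed_def
proof (intro ballI allI impI)
  fix t s assume t: "t \<in> tau_tree G F A" and "prefix s t"
  obtain u where u: "t = s @ u" using \<open>prefix s t\<close> by (auto simp: prefix_def)
  have "shift_set G A t \<subseteq> shift_set G A s" unfolding u shift_set_append by (rule shift_set_subset)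
  then have "shift_set G A s \<notin> F"
    using left_inv_lower_subset[OF F] t unfolding tau_tree_def by blast
  moreover have "set s \<subseteq> set t" using u by simp
  ultimately show "s \<in> tau_tree G F A" using t unfolding tau_tree_def by blast
qed

lemma tau_tree_Cons: "z # s \<in> tau_tree G F A \<Longrightarrow> z \<in> carrier G - {\<one>\<^bsub>G\<^esub>}"
  by (simp add: tau_tree_def)

lemma tau_tree_branch:
  "z \<in> carrier G - {\<one>\<^bsub>G\<^esub>} \<Longrightarrow>
   tau_tree G F (A \<inter> (z <#\<^bsub>G\<^esub> A)) = branch (tau_tree G F A) z"
  by (auto simp: tau_tree_def branch_def shift_set_Cons)

lemma tau_tree_empty_iff:
  assumes "left_inv_lower G F"
  shows "tau_tree G F A = {} \<longleftrightarrow> A \<in> F"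
proof
  assume "tau_tree G F A = {}"
  then have "[] \<notin> tau_tree G F A" by simp
  then show "A \<in> F" by (simp add: tau_tree_def shift_set_def)
next
  assume "A \<in> F"
  then have "shift_set G A s \<in> F" for s
    by (rule left_inv_lower_subset[OF assms _ shift_set_subset])
  then show "tau_tree G F A = {}" by (simp add: tau_tree_def)
qed


subsection \<open>The iterates of \<open>\<tau>\<close>\<close>

lemma tau_iter_unfold:
  "tau_iter G F \<alpha> = (if \<forall>b. \<not> b < \<alpha> then F
       else tau G (\<Union>b\<in>{b. b < (\<alpha>::'o::wellorder)}. tau_iter G F b))"
  unfolding tau_iter_def by (subst wfrec[OF wf]) (simp add: cut_apply)

lemma tau_iter_bottom: "\<forall>b. \<not> b < (\<alpha>::'o::wellorder) \<Longrightarrow> tau_iter G F \<alpha> = F"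
  by (subst tau_iter_unfold) simp

lemma tau_iter_above:
  assumes "\<exists>b. b < (\<alpha>::'o::wellorder)"
  shows "tau_iter G F \<alpha> = tau G (\<Union>b\<in>{b. b < \<alpha>}. tau_iter G F b)"
proof -
  have "\<not> (\<forall>b. \<not> b < \<alpha>)" using assms by blast
  then show ?thesis by (subst tau_iter_unfold) (rule if_not_P)
qed

context group
begin

text \<open>Left translation is injective, hence commutes with intersections.\<close>
lemma lcos_Int:
  assumes x: "x \<in> carrier G" and "B \<subseteq> carrier G" "C \<subseteq> carrier G"
  shows "x <# (B \<inter> C) = (x <# B) \<inter> (x <# C)"
proof -
  have coset_image: "x <# M = (\<otimes>) x ` M" for M unfolding l_coset_def by auto
  have "inj_on ((\<otimes>) x) (carrier G)" using x by (auto intro: inj_onI)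
  then have "(\<otimes>) x ` (B \<inter> C) = (\<otimes>) x ` B \<inter> (\<otimes>) x ` C"
    using assms by (intro inj_on_image_Int) auto
  then show ?thesis by (simp add: coset_image)
qed

lemma lcos_subset: "x \<in> carrier G \<Longrightarrow> B \<subseteq> carrier G \<Longrightarrow> x <# B \<subseteq> carrier G"
  unfolding l_coset_def by auto

text \<open>By left invariance, membership in \<open>\<tau>(H)\<close> only needs the pairs \<open>e, z\<close>:
  \<open>xA \<inter> yA = x(A \<inter> x\<inverse>yA)\<close>.\<close>
lemma tau_iff_shifts:
  assumes H: "left_inv_lower G H" and A: "A \<subseteq> carrier G"
  shows "A \<in> tau G H \<longleftrightarrow> (\<forall>z\<in>carrier G - {\<one>}. A \<inter> (z <# A) \<in> H)"
proof
  assume "A \<in> tau G H"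
  then have "(\<one> <# A) \<inter> (z <# A) \<in> H" if "z \<in> carrier G - {\<one>}" for z
    using that unfolding tau_def by auto
  then show "\<forall>z\<in>carrier G - {\<one>}. A \<inter> (z <# A) \<in> H" by (simp add: lcos_mult_one[OF A])
next
  assume shifts: "\<forall>z\<in>carrier G - {\<one>}. A \<inter> (z <# A) \<in> H"
  have "(x <# A) \<inter> (y <# A) \<in> H" if xy: "x \<in> carrier G" "y \<in> carrier G" "x \<noteq> y" for x y
  proof -
    define z where "z = inv x \<otimes> y"
    have z: "z \<in> carrier G" "x \<otimes> z = y" using xy by (simp_all add: z_def m_assoc[symmetric])
    then have "z \<noteq> \<one>" using xy by auto
    then have "x <# (A \<inter> (z <# A)) \<in> H"
      using shifts z(1) left_inv_lower_translate[OF H _ xy(1)] by blast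
    also have "x <# (A \<inter> (z <# A)) = (x <# A) \<inter> (y <# A)"
      using lcos_Int[OF xy(1) A lcos_subset[OF z(1) A]] lcos_m_assoc[OF A xy(1) z(1)] z(2)
      by simp
    finally show ?thesis .
  qed
  then show "A \<in> tau G H" using A unfolding tau_def by blast
qed

lemma left_inv_lower_tau:
  assumes H: "left_inv_lower G H"
  shows "left_inv_lower G (tau G H)"
  unfolding left_inv_lower_def
proof (intro conjI ballI allI impI)
  show "tau G H \<subseteq> Pow (carrier G)" unfolding tau_def by auto
next
  fix X g assume X: "X \<in> tau G H" and g: "g \<in> carrier G"
  have Xc: "X \<subseteq> carrier G" using X by (simp add: tau_def)
  have "(x <# (g <# X)) \<inter> (y <# (g <# X)) \<in> H"
    if xy: "x \<in> carrier G" "y \<in> carrier G" "x \<noteq> y" for x y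
  proof -
    have "x \<otimes> g \<noteq> y \<otimes> g" using xy g by simp
    then have "((x \<otimes> g) <# X) \<inter> ((y \<otimes> g) <# X) \<in> H" using X xy g unfolding tau_def by simp
    then show ?thesis using lcos_m_assoc[OF Xc xy(1) g] lcos_m_assoc[OF Xc xy(2) g] by simp
  qed
  then show "g <# X \<in> tau G H" using lcos_subset[OF g Xc] unfolding tau_def by blast
next
  fix X Y assume X: "X \<in> tau G H" and Y: "Y \<subseteq> X"
  have "(x <# Y) \<inter> (y <# Y) \<in> H"
    if xy: "x \<in> carrier G" "y \<in> carrier G" "x \<noteq> y" for x y
  proof (rule left_inv_lower_subset[OF H])
    show "(x <# X) \<inter> (y <# X) \<in> H" using X xy unfolding tau_def by simp
    show "(x <# Y) \<inter> (y <# Y) \<subseteq> (x <# X) \<inter> (y <# X)" using Y unfolding l_coset_def by blast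
  qed
  then show "Y \<in> tau G H" using X Y unfolding tau_def by auto
qed

lemma left_inv_lower_tau_iter:
  assumes F: "left_inv_lower G F"
  shows "left_inv_lower G (tau_iter G F (\<alpha>::'o::wellorder))"
proof (induction \<alpha> rule: less_induct)
  case (less \<alpha>)
  show ?case
  proof (cases "\<exists>b. b < \<alpha>")
    case True
    have "left_inv_lower G (\<Union>b\<in>{b. b < \<alpha>}. tau_iter G F b)"
      by (rule left_inv_lower_UN) (simp add: less.IH)
    then show ?thesis unfolding tau_iter_above[OF True] by (rule left_inv_lower_tau)
  qed (simp add: F tau_iter_bottom)
qed

text \<open>In the successor
  step, \<open>A \<in> \<tau>(\<tau>\<^sup><\<^sup>\<alpha>(\<F>))\<close> reduces to the sets \<open>A \<inter> zA\<close>, whose \<open>\<tau>\<close>-trees are the branches.\<close>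
lemma tau_iter_iff_labellable:
  assumes F: "left_inv_lower G F"
  shows "A \<subseteq> carrier G \<Longrightarrow> A \<in> tau_iter G F (\<alpha>::'o::wellorder) \<longleftrightarrow> labellable (tau_tree G F A) \<alpha>"
proof (induction \<alpha> arbitrary: A rule: less_induct)
  case (less \<alpha>)
  show ?case
  proof (cases "\<forall>b. \<not> b < \<alpha>")
    case True
    then have "A \<in> tau_iter G F \<alpha> \<longleftrightarrow> A \<in> F" by (simp add: tau_iter_bottom)
    also have "\<dots> \<longleftrightarrow> tau_tree G F A = {}" by (rule tau_tree_empty_iff[OF F, symmetric])
    also have "\<dots> \<longleftrightarrow> labellable (tau_tree G F A) \<alpha>" by (rule labellable_bottom[OF True, symmetric])
    finally show ?thesis .
  next
    case False
    then have pos: "\<exists>b. b < \<alpha>" by simp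
    let ?U = "\<Union>b\<in>{b. b < \<alpha>}. tau_iter G F b"
    have U: "left_inv_lower G ?U" by (rule left_inv_lower_UN) (rule left_inv_lower_tau_iter[OF F])
    have branch_iff:
      "A \<inter> (z <# A) \<in> ?U \<longleftrightarrow> (\<exists>\<beta><\<alpha>. labellable (branch (tau_tree G F A) z) \<beta>)" if z: "z \<in> carrier G - {\<one>}" for z
      using less.IH[of _ "A \<inter> (z <# A)"] less.prems tau_tree_branch[OF z] by auto
    have "A \<in> tau_iter G F \<alpha> \<longleftrightarrow> (\<forall>z\<in>carrier G - {\<one>}. A \<inter> (z <# A) \<in> ?U)"
      using tau_iff_shifts[OF U less.prems] by (simp add: tau_iter_above[OF pos])
    also have "\<dots> \<longleftrightarrow> (\<forall>z\<in>carrier G - {\<one>}. \<exists>\<beta><\<alpha>. labellable (branch (tau_tree G F A) z) \<beta>)"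
      using branch_iff by blast
    also have "\<dots> \<longleftrightarrow> labellable (tau_tree G F A) \<alpha>"
      by (rule labellable_iff_branches[OF tau_tree_prefix_closed[OF F] _ pos, symmetric])
        (rule tau_tree_Cons)
    finally show ?thesis .
  qed
qed

end

theorem theorem3p2:
  fixes G (structure) and \<F> :: "'g set set" and A :: "'g set" and \<alpha> :: "'o::wellorder"
  assumes "group G" and "left_inv_lower G \<F>" and "A \<subseteq> carrier G"
  shows "A \<in> tau_iter G \<F> \<alpha> \<longleftrightarrow>
           wf_poset (tau_tree G \<F> A) \<and>
           (if finite_ord \<alpha> then tree_rank_le (tau_tree G \<F> A) \<alpha>
            else tree_rank_le_succ (tau_tree G \<F> A) \<alpha>)"
  using group.tau_iter_iff_labellable[OF assms] rank_bound_iff_labellable by blast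

end
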